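(* Impose (A1)–(A6), (A8) and the reverse mean dominance assumption (A9'), and fix $x\in\mathcal X$, $u\in[0,1]$. Write $R(x,u)=\frac{m_1^Y(x,u)}{m_1^S(x,u)}-\frac{m_0^Y(x,u)}{m_0^S(x,u)}$. Then $\Delta^{OO}_{Y^*}(x,u)\le R(x,u)$ in each case below, and moreover: (i) under (A7.1), $\Delta^{OO}_{Y^*}(x,u)\ge\underline y^*-\frac{m_0^Y(x,u)}{m_0^S(x,u)}$; (ii) under (A7.2), $\Delta^{OO}_{Y^*}(x,u)\ge\frac{m_1^Y(x,u)-\overline y^*\Delta_S(x,u)}{m_0^S(x,u)}-\frac{m_0^Y(x,u)}{m_0^S(x,u)}$; (iii) under (A7.3) (sub-case (a) or (b)), $\Delta^{OO}_{Y^*}(x,u)\ge\max\left\{\frac{m_1^Y(x,u)-\overline y^*\Delta_S(x,u)}{m_0^S(x,u)},\underline y^*\right\}-\frac{m_0^Y(x,u)}{m_0^S(x,u)}$; (iv) if $\mathcal Y^*=\mathbb R$, then $-\infty\le\Delta^{OO}_{Y^*}(x,u)\le R(x,u)$.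
   Context: Standing setup. On a common probability space: $X$ (covariates, support $\mathcal X$), $Z$ (instrument, support $\mathcal Z$), $W=(X,Z)$; latent real random variables $U,V$, jointly continuously distributed conditional on $X$, with $U\mid X$ and $V\mid X$ each Uniform$[0,1]$ (their joint dependence unrestricted); real potential outcomes of interest $Y_0^*,Y_1^*$. Given functions $P:\mathcal X\times\mathcal Z\to[0,1]$ and $Q:\{0,1\}\times\mathcal X\to[0,1]$, define the treatment $D=\mathbf 1\{P(W)\ge U\}$, potential selection indicators $S_d=\mathbf 1\{Q(d,X)\ge V\}$ ($d\in\{0,1\}$), selection indicator $S=DS_1+(1-D)S_0$, potential observable outcomes $Y_d=S_dY_d^*$ and observable outcome $Y=DY_1+(1-D)Y_0$. For $x\in\mathcal X$, $u\in[0,1]$, $d\in\{0,1\}$: $m_d^Y(x,u)=\mathbb E[Y_d\mid X=x,U=u]$, $m_d^S(x,u)=\mathbb E[S_d\mid X=x,U=u]$, $\Delta_S(x,u)=m_1^S(x,u)-m_0^S(x,u)$, and $\Delta^{OO}_{Y^*}(x,u)=\mathbb E[Y_1^*-Y_0^*\mid X=x,U=u,S_0=1,S_1=1]$. Ratios appearing are assumed well defined. Assumptions: (A1) $Z$ is independent of $(U,V,Y_0^*,Y_1^* )$ conditional on $X$; (A2) the distribution of $P(W)$ given $X$ is nondegenerate; (A3) $\mathbb E|Y_d^*|<\infty$ and $\mathbb E[(Y_d^* )^2]<\infty$; (A4) $0<\mathbb P[D=1\mid X]<1$; (A5) $X$ is invariant to counterfactual manipulation of treatment; (A6) $Y_0^*,Y_1^*$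 have a common support $\mathcal Y^*\subseteq\mathbb R$; $\underline y^*=\inf\mathcal Y^*$, $\overline y^*=\sup\mathcal Y^*$ (possibly infinite), known. Support cases: (A7.1) $\underline y^*>-\infty$, $\overline y^*=+\infty$, $\mathcal Y^*$ an interval; (A7.2) $\underline y^*=-\infty$, $\overline y^*<\infty$, $\mathcal Y^*$ an interval; (A7.3) both finite and either (a) $\mathcal Y^*$ an interval or (b) $\underline y^*,\overline y^*\in\mathcal Y^*$. (A8) $Q(1,x)>Q(0,x)>0$ for all $x\in\mathcal X$. (A9') (reverse mean dominance) for all $x,u$: $\mathbb E[Y_1^*\mid X=x,U=u,S_0=1,S_1=1]\le\mathbb E[Y_1^*\mid X=x,U=u,S_0=0,S_1=1]$. *)

theory Defs
  imports "HOL-Probability.Probability"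
begin

text \<open>
  For every covariate value x and every u, the measure
  kap x u is (a version of) the conditional distribution of the triple
  (V, Y0*, Y1*) given X = x, U = u.  A point t = (v, y0, y1) of its sample space
  has fst t = v, fst (snd t) = y0, snd (snd t) = y1.
  Treatment arms d are encoded as naturals 0 and 1.
\<close>

definition Ssel :: "(nat \<Rightarrow> 'x \<Rightarrow> real) \<Rightarrow> nat \<Rightarrow> 'x \<Rightarrow> real \<times> real \<times> real \<Rightarrow> bool" where
  "Ssel Q d x t \<longleftrightarrow> fst t \<le> Q d x"

definition Ystar :: "nat \<Rightarrow> real \<times> real \<times> real \<Rightarrow> real" where
  "Ystar d t = (if d = 1 then snd (snd t) else fst (snd t))"

definition mY :: "(nat \<Rightarrow> 'x \<Rightarrow> real) \<Rightarrow> ('x \<Rightarrow> real \<Rightarrow> (real \<times> real \<times> real) measure)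
    \<Rightarrow> nat \<Rightarrow> 'x \<Rightarrow> real \<Rightarrow> real" where
  "mY Q kap d x u = (\<integral>t. indicator {t. Ssel Q d x t} t * Ystar d t \<partial>(kap x u))"

definition mS :: "(nat \<Rightarrow> 'x \<Rightarrow> real) \<Rightarrow> ('x \<Rightarrow> real \<Rightarrow> (real \<times> real \<times> real) measure)
    \<Rightarrow> nat \<Rightarrow> 'x \<Rightarrow> real \<Rightarrow> real" where
  "mS Q kap d x u = measure (kap x u) {t. Ssel Q d x t}"

definition DeltaS :: "(nat \<Rightarrow> 'x \<Rightarrow> real) \<Rightarrow> ('x \<Rightarrow> real \<Rightarrow> (real \<times> real \<times> real) measure)
    \<Rightarrow> 'x \<Rightarrow> real \<Rightarrow> real" where
  "DeltaS Q kap x u = mS Q kap 1 x u - mS Q kap 0 x u"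

definition cond_mean :: "'a measure \<Rightarrow> 'a set \<Rightarrow> ('a \<Rightarrow> real) \<Rightarrow> real" where
  "cond_mean N E f = (\<integral>t. indicator E t * f t \<partial>N) / measure N E"

definition AO :: "(nat \<Rightarrow> 'x \<Rightarrow> real) \<Rightarrow> 'x \<Rightarrow> (real \<times> real \<times> real) set" where
  "AO Q x = {t. Ssel Q 0 x t \<and> Ssel Q 1 x t}"

definition NO :: "(nat \<Rightarrow> 'x \<Rightarrow> real) \<Rightarrow> 'x \<Rightarrow> (real \<times> real \<times> real) set" where
  "NO Q x = {t. \<not> Ssel Q 0 x t \<and> Ssel Q 1 x t}"

definition DeltaOO :: "(nat \<Rightarrow> 'x \<Rightarrow> real) \<Rightarrow> ('x \<Rightarrow> real \<Rightarrow> (real \<times> real \<times> real) measure)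
    \<Rightarrow> 'x \<Rightarrow> real \<Rightarrow> real" where
  "DeltaOO Q kap x u = cond_mean (kap x u) (AO Q x) (\<lambda>t. Ystar 1 t - Ystar 0 t)"

definition ylow :: "real set \<Rightarrow> ereal" where "ylow Ys = Inf (ereal ` Ys)"
definition yhigh :: "real set \<Rightarrow> ereal" where "yhigh Ys = Sup (ereal ` Ys)"

definition sel_model ::
  "'a measure \<Rightarrow> 'x measure \<Rightarrow> ('a \<Rightarrow> 'x) \<Rightarrow> ('a \<Rightarrow> real) \<Rightarrow> ('a \<Rightarrow> real)
   \<Rightarrow> ('a \<Rightarrow> real) \<Rightarrow> ('a \<Rightarrow> real) \<Rightarrow> real set
   \<Rightarrow> ('x \<Rightarrow> real \<Rightarrow> (real \<times> real \<times> real) measure) \<Rightarrow> bool" where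
  "sel_model M MX X U V Y0s Y1s Ys kap \<longleftrightarrow>
     prob_space M \<and>
     X \<in> measurable M MX \<and>
     U \<in> borel_measurable M \<and> V \<in> borel_measurable M \<and>
     Y0s \<in> borel_measurable M \<and> Y1s \<in> borel_measurable M \<and>
     (\<forall>\<omega>\<in>space M. U \<omega> \<in> {0..1} \<and> V \<omega> \<in> {0..1} \<and> Y0s \<omega> \<in> Ys \<and> Y1s \<omega> \<in> Ys) \<and>
     (\<forall>A\<in>sets MX. \<forall>s\<in>{0..1}.
        measure M {\<omega>\<in>space M. X \<omega> \<in> A \<and> U \<omega> \<le> s} = s * measure M {\<omega>\<in>space M. X \<omega> \<in> A} \<and>
        measure M {\<omega>\<in>space M. X \<omega> \<in> A \<and> V \<omega> \<le> s} = s * measure M {\<omega>\<in>space M. X \<omega> \<in> A}) \<and>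
     integrable M Y0s \<and> integrable M Y1s \<and>
     integrable M (\<lambda>\<omega>. (Y0s \<omega>)\<^sup>2) \<and> integrable M (\<lambda>\<omega>. (Y1s \<omega>)\<^sup>2) \<and>
     (\<forall>x u. prob_space (kap x u) \<and> sets (kap x u) = sets borel \<and>
        (AE t in kap x u. fst (snd t) \<in> Ys \<and> snd (snd t) \<in> Ys) \<and>
        integrable (kap x u) (Ystar 0) \<and> integrable (kap x u) (Ystar 1)) \<and>
     (\<forall>A\<in>sets (MX \<Otimes>\<^sub>M borel). \<forall>B\<in>sets (borel :: (real \<times> real \<times> real) measure).
        measure M {\<omega>\<in>space M. (X \<omega>, U \<omega>) \<in> A \<and> (V \<omega>, Y0s \<omega>, Y1s \<omega>) \<in> B}
        = (\<integral>\<omega>. indicator A (X \<omega>, U \<omega>) * measure (kap (X \<omega>) (U \<omega>)) B \<partial>M))"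

end

theory Submission
  imports Defs
begin

text \<open>
  Since Q 0 x < Q 1 x, the always-observed event {S0 = 1, S1 = 1} is just {S0 = 1}, and
  {S1 = 1} splits into it and the observed-only-if-treated event {S0 = 0, S1 = 1}.  Hence
  Delta^OO is the mean of Y1* on {S0 = 1} minus m_0^Y / m_0^S, and every bound reduces to
  bounding that mean of Y1*.  Reverse mean dominance places it below the mean of Y1* on the
  other event, so it lies below their mediant, the mean of Y1* on {S1 = 1}.  From below it
  is at least the lower end of the support; alternatively, bounding Y1* above by the upper
  end of the support on {S0 = 0, S1 = 1} removes the contribution of that event from m_1^Y.
\<close>

lemma cond_mean_eq_set_integral: "cond_mean N E f = (LINT t:E|N. f t) / measure N E"
  by (simp add: cond_mean_def set_lebesgue_integral_def)

lemma integrable_imp_set_integrable: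
  fixes f :: "'a \<Rightarrow> real"
  shows "integrable N f \<Longrightarrow> A \<in> sets N \<Longrightarrow> set_integrable N A f"
  unfolding set_integrable_def by (rule integrable_mult_indicator)

context finite_measure
begin

lemma set_integral_ge_const:
  assumes A: "A \<in> sets M" and f: "integrable M f" and ge: "AE t\<in>A in M. c \<le> f t"
  shows "c * measure M A \<le> (LINT t:A|M. f t)"
proof -
  have "(LINT t:A|M. c) \<le> (LINT t:A|M. f t)"
    using A f ge by (intro set_integral_mono_AE integrable_imp_set_integrable) auto
  then show ?thesis
    using A by (simp add: set_integral_const emeasure_eq_measure mult.commute)
qed

lemma set_integral_le_const:
  assumes A: "A \<in> sets M" and f: "integrable M f" and le: "AE t\<in>A in M. f t \<le> c"
  shows "(LINT t:A|M. f t) \<le> c * measure M A"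
proof -
  have "(LINT t:A|M. f t) \<le> (LINT t:A|M. c)"
    using A f le by (intro set_integral_mono_AE integrable_imp_set_integrable) auto
  then show ?thesis
    using A by (simp add: set_integral_const emeasure_eq_measure mult.commute)
qed

lemma cond_mean_diff:
  assumes "A \<in> sets M" "integrable M f" "integrable M g"
  shows "cond_mean M A (\<lambda>t. f t - g t) = cond_mean M A f - cond_mean M A g"
  using assms
  by (simp add: cond_mean_eq_set_integral set_integral_diff integrable_imp_set_integrable
      diff_divide_distrib)

lemma cond_mean_ge_const:
  assumes "A \<in> sets M" "integrable M f" "measure M A > 0" "AE t\<in>A in M. c \<le> f t"
  shows "c \<le> cond_mean M A f"
  using set_integral_ge_const[OF assms(1,2,4)] assms(3)
  by (simp add: cond_mean_eq_set_integral pos_le_divide_eq)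

lemma cond_mean_ge_trimmed:
  assumes A: "A \<in> sets M" and B: "B \<in> sets M" and f: "integrable M f"
    and pos: "measure M A > 0" and le: "AE t\<in>B in M. f t \<le> c"
  shows "((LINT t:A|M. f t) + (LINT t:B|M. f t) - c * measure M B) / measure M A \<le> cond_mean M A f"
  using set_integral_le_const[OF B f le] pos
  by (simp add: cond_mean_eq_set_integral divide_right_mono)

lemma cond_mean_le_cond_mean_Un:
  assumes A: "A \<in> sets M" and B: "B \<in> sets M" and disj: "A \<inter> B = {}"
    and f: "integrable M f" and pos: "measure M A > 0"
    and dom: "measure M B > 0 \<Longrightarrow> cond_mean M A f \<le> cond_mean M B f"
  shows "cond_mean M A f \<le> cond_mean M (A \<union> B) f"
proof (cases "measure M B > 0")
  case True
  have split: "(LINT t:A\<union>B|M. f t) = (LINT t:A|M. f t) + (LINT t:B|M. f t)"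
    using A B disj f by (intro set_integral_Un integrable_imp_set_integrable)
  have "measure M (A \<union> B) = measure M A + measure M B"
    using A B disj by (simp add: finite_measure_Union)
  moreover have "(LINT t:A|M. f t) / measure M A \<le> (LINT t:B|M. f t) / measure M B"
    using dom True by (simp add: cond_mean_eq_set_integral)
  ultimately show ?thesis
    \<comment> \<open>a mediant lies between the two fractions\<close>
    using pos True by (simp add: cond_mean_eq_set_integral split field_simps)
next
  case False
  then have null: "B \<in> null_sets M"
    using B by (simp add: null_sets_def emeasure_eq_measure measure_nonneg antisym)
  have "(A \<union> B - A) \<union> (A - (A \<union> B)) = B - A" by blast
  then have "(A \<union> B - A) \<union> (A - (A \<union> B)) \<in> null_sets M"
    using null_sets_subset[OF null, of "B - A"] A B by auto
  then have "(LINT t:A\<union>B|M. f t) = (LINT t:A|M. f t)"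
    using A B f by (intro set_integral_null_delta) auto
  moreover have "measure M (A \<union> B) = measure M A"
    using A null by (simp add: measure_Un_null_set)
  ultimately show ?thesis
    by (simp add: cond_mean_eq_set_integral)
qed

end

lemma real_of_ylow_le:
  assumes "ylow Ys > -\<infinity>" "y \<in> Ys"
  shows "real_of_ereal (ylow Ys) \<le> y"
proof -
  have "ylow Ys \<le> ereal y" unfolding ylow_def using assms(2) by (simp add: INF_lower)
  then show ?thesis using assms(1) by (cases "ylow Ys") auto
qed

lemma le_real_of_yhigh:
  assumes "yhigh Ys < \<infinity>" "y \<in> Ys"
  shows "y \<le> real_of_ereal (yhigh Ys)"
proof -
  have "ereal y \<le> yhigh Ys" unfolding yhigh_def using assms(2) by (simp add: SUP_upper)
  then show ?thesis using assms(1) by (cases "yhigh Ys") auto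
qed

lemma Ssel_sets_borel: "{t. Ssel Q d x t} \<in> sets borel"
  unfolding Ssel_def
  by (intro borel_closed closed_Collect_le continuous_on_fst continuous_on_id continuous_on_const)

lemma AO_sets_borel: "AO Q x \<in> sets borel"
proof -
  have "AO Q x = {t. Ssel Q 0 x t} \<inter> {t. Ssel Q 1 x t}" unfolding AO_def by auto
  then show ?thesis using Ssel_sets_borel by (metis sets.Int)
qed

lemma NO_sets_borel: "NO Q x \<in> sets borel"
proof -
  have "NO Q x = {t. Ssel Q 1 x t} - {t. Ssel Q 0 x t}" unfolding NO_def by auto
  then show ?thesis using Ssel_sets_borel by (metis sets.Diff)
qed

lemma AO_Int_NO: "AO Q x \<inter> NO Q x = {}"
  unfolding AO_def NO_def by auto

lemma Ssel_1_eq_AO_Un_NO: "{t. Ssel Q 1 x t} = AO Q x \<union> NO Q x"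
  unfolding AO_def NO_def by auto

lemma AO_eq_Ssel_0: "Q 0 x \<le> Q 1 x \<Longrightarrow> AO Q x = {t. Ssel Q 0 x t}"
  unfolding AO_def Ssel_def by auto

lemma mY_eq_set_integral: "mY Q kap d x u = (LINT t:{t. Ssel Q d x t}|kap x u. Ystar d t)"
  by (simp add: mY_def set_lebesgue_integral_def)

lemma mY_div_mS: "mY Q kap d x u / mS Q kap d x u = cond_mean (kap x u) {t. Ssel Q d x t} (Ystar d)"
  by (simp add: mY_eq_set_integral mS_def cond_mean_eq_set_integral)

lemma mS_0_eq_measure_AO: "Q 0 x \<le> Q 1 x \<Longrightarrow> mS Q kap 0 x u = measure (kap x u) (AO Q x)"
  by (simp add: mS_def AO_eq_Ssel_0)

lemma DeltaS_eq_measure_NO: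
  assumes "finite_measure (kap x u)" "sets (kap x u) = sets borel" "Q 0 x \<le> Q 1 x"
  shows "DeltaS Q kap x u = measure (kap x u) (NO Q x)"
proof -
  have "mS Q kap 1 x u = measure (kap x u) (AO Q x) + measure (kap x u) (NO Q x)"
    unfolding mS_def Ssel_1_eq_AO_Un_NO
    by (rule finite_measure.finite_measure_Union[OF assms(1) _ _ AO_Int_NO])
      (simp_all add: assms(2) AO_sets_borel NO_sets_borel)
  then show ?thesis
    using assms(3) by (simp add: DeltaS_def mS_0_eq_measure_AO)
qed

lemma mY_1_eq:
  assumes "sets (kap x u) = sets borel" "integrable (kap x u) (Ystar 1)"
  shows "mY Q kap 1 x u
    = (LINT t:AO Q x|kap x u. Ystar 1 t) + (LINT t:NO Q x|kap x u. Ystar 1 t)"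
  unfolding mY_eq_set_integral Ssel_1_eq_AO_Un_NO
  by (rule set_integral_Un[OF AO_Int_NO];
      rule integrable_imp_set_integrable[OF assms(2)]; simp add: assms(1) AO_sets_borel NO_sets_borel)

lemma DeltaOO_eq:
  assumes "finite_measure (kap x u)" "sets (kap x u) = sets borel"
    "integrable (kap x u) (Ystar 0)" "integrable (kap x u) (Ystar 1)" "Q 0 x \<le> Q 1 x"
  shows "DeltaOO Q kap x u
    = cond_mean (kap x u) (AO Q x) (Ystar 1) - mY Q kap 0 x u / mS Q kap 0 x u"
  unfolding DeltaOO_def mY_div_mS AO_eq_Ssel_0[of Q x, OF assms(5)]
  using assms
  by (simp add: finite_measure.cond_mean_diff Ssel_sets_borel)

theorem corollaryF1:
  fixes M :: "'a measure" and MX :: "'x measure" and X :: "'a \<Rightarrow> 'x"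
    and U V Y0s Y1s :: "'a \<Rightarrow> real" and Ys :: "real set"
    and kap :: "'x \<Rightarrow> real \<Rightarrow> (real \<times> real \<times> real) measure"
    and Q :: "nat \<Rightarrow> 'x \<Rightarrow> real" and x :: 'x and u :: real
  assumes model: "sel_model M MX X U V Y0s Y1s Ys kap"
    and A8: "\<forall>x'\<in>X ` space M. Q 1 x' > Q 0 x' \<and> Q 0 x' > 0"
    and A9': "\<forall>x'\<in>X ` space M. \<forall>u'\<in>{0..1}. measure (kap x' u') (NO Q x') > 0 \<longrightarrow>
               cond_mean (kap x' u') (AO Q x') (Ystar 1) \<le> cond_mean (kap x' u') (NO Q x') (Ystar 1)"
    and x: "x \<in> X ` space M" and u: "u \<in> {0..1}"
    and wd0: "mS Q kap 0 x u > 0" and wd1: "mS Q kap 1 x u > 0"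
  defines "R \<equiv> mY Q kap 1 x u / mS Q kap 1 x u - mY Q kap 0 x u / mS Q kap 0 x u"
  shows "DeltaOO Q kap x u \<le> R
    \<and> ((ylow Ys > -\<infinity> \<and> yhigh Ys = \<infinity> \<and> is_interval Ys) \<longrightarrow>
         DeltaOO Q kap x u \<ge> real_of_ereal (ylow Ys) - mY Q kap 0 x u / mS Q kap 0 x u)
    \<and> ((ylow Ys = -\<infinity> \<and> yhigh Ys < \<infinity> \<and> is_interval Ys) \<longrightarrow>
         DeltaOO Q kap x u \<ge> (mY Q kap 1 x u - real_of_ereal (yhigh Ys) * DeltaS Q kap x u) / mS Q kap 0 x u
                              - mY Q kap 0 x u / mS Q kap 0 x u)
    \<and> ((ylow Ys > -\<infinity> \<and> yhigh Ys < \<infinity> \<and>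
        (is_interval Ys \<or> (real_of_ereal (ylow Ys) \<in> Ys \<and> real_of_ereal (yhigh Ys) \<in> Ys))) \<longrightarrow>
         DeltaOO Q kap x u \<ge> max ((mY Q kap 1 x u - real_of_ereal (yhigh Ys) * DeltaS Q kap x u) / mS Q kap 0 x u)
                                   (real_of_ereal (ylow Ys))
                              - mY Q kap 0 x u / mS Q kap 0 x u)
    \<and> (Ys = UNIV \<longrightarrow> -\<infinity> \<le> ereal (DeltaOO Q kap x u) \<and> DeltaOO Q kap x u \<le> R)"
proof -
  let ?N = "kap x u" and ?m = "cond_mean (kap x u) (AO Q x) (Ystar 1)"
  have N: "prob_space ?N" "sets ?N = sets borel" "AE t in ?N. fst (snd t) \<in> Ys \<and> snd (snd t) \<in> Ys"
    "integrable ?N (Ystar 0)" "integrable ?N (Ystar 1)"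
    using model unfolding sel_model_def by auto
  interpret prob_space ?N by (fact N(1))
  have Q: "Q 0 x \<le> Q 1 x" using A8 x by force
  have sets: "AO Q x \<in> sets ?N" "NO Q x \<in> sets ?N"
    using N(2) by (simp_all add: AO_sets_borel NO_sets_borel)
  have AO_pos: "measure ?N (AO Q x) > 0" using wd0 Q by (simp add: mS_0_eq_measure_AO)
  have Y1_Ys: "AE t in ?N. Ystar 1 t \<in> Ys" using N(3) by eventually_elim (simp add: Ystar_def)
  have DeltaOO: "DeltaOO Q kap x u = ?m - mY Q kap 0 x u / mS Q kap 0 x u"
    using N Q finite_measure_axioms by (simp add: DeltaOO_eq)
  have "?m \<le> cond_mean ?N (AO Q x \<union> NO Q x) (Ystar 1)"
    using A9' x u sets AO_pos N(5) by (intro cond_mean_le_cond_mean_Un AO_Int_NO) auto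
  then have upper: "DeltaOO Q kap x u \<le> R"
    unfolding R_def DeltaOO mY_div_mS Ssel_1_eq_AO_Un_NO by simp
  have lower_ylow: "real_of_ereal (ylow Ys) \<le> ?m" if "ylow Ys > -\<infinity>"
    using Y1_Ys that real_of_ylow_le sets AO_pos N(5)
    by (intro cond_mean_ge_const) (auto elim!: AE_mp)
  have lower_yhigh: "(mY Q kap 1 x u - real_of_ereal (yhigh Ys) * DeltaS Q kap x u) / mS Q kap 0 x u \<le> ?m"
    if "yhigh Ys < \<infinity>"
    unfolding mY_1_eq[of kap x u Q, OF N(2,5)] DeltaS_eq_measure_NO[of kap x u Q, OF finite_measure_axioms N(2) Q]
      mS_0_eq_measure_AO[of Q, OF Q]
    using Y1_Ys that le_real_of_yhigh sets AO_pos N(5)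
    by (intro cond_mean_ge_trimmed) (auto elim!: AE_mp)
  show ?thesis
    using upper lower_ylow lower_yhigh unfolding DeltaOO by auto
qed

end
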